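(* For every integer $g\geq 1$ there exist a connected graph $G$ and a connected spanning subgraph $H$ of $G$, both having $R_g$-cutsets, such that $\kappa_g(G)=1$ and $\kappa_g(H)=2$; in particular $\kappa_g(H)>\kappa_g(G)$. Concretely: let $X_1,X_2,Y_1,Y_2$ be four vertex-disjoint cliques, each with at least $g+1$ vertices, and let $u,v,w$ be three further vertices; $G$ is obtained by joining $u$ to every vertex of $X_1\cup X_2\cup Y_1\cup Y_2$, joining each of $v$ and $w$ to every vertex of $Y_1\cup Y_2$, and adding the edges $uv,uw$; $H$ is obtained from $G$ by deleting all edges inside $X_1$ and inside $X_2$, all edges between $u$ and $Y_1$, and the edges $uv,uw$.
   Context: All graphs are finite and simple. A set $S\subseteq V(G)$ is a cutset if $G-S$ is disconnected. For a non-negative integer $g$, a cutset $S$ is an $R_g$-cutset if every connected component of $G-S$ has at least $g+1$ vertices. If $G$ has at least one $R_g$-cutset, the $g$-extra connectivity $\kappa_g(G)$ is the minimum cardinality of an $R_g$-cutset of $G$. A spanning subgraph of $G$ is a subgraph with vertex set $V(G)$. *)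

theory Defs
  imports Main
begin

definition simple_graph :: "'a set \<Rightarrow> ('a \<times> 'a) set \<Rightarrow> bool" where
  "simple_graph V E \<longleftrightarrow> finite V \<and> E \<subseteq> V \<times> V \<and> sym E \<and> (\<forall>x. (x, x) \<notin> E)"

definition induced_edges :: "('a \<times> 'a) set \<Rightarrow> 'a set \<Rightarrow> ('a \<times> 'a) set" where
  "induced_edges E W = E \<inter> (W \<times> W)"

definition connected_graph :: "'a set \<Rightarrow> ('a \<times> 'a) set \<Rightarrow> bool" where
  "connected_graph V E \<longleftrightarrow> V \<noteq> {} \<and>
     (\<forall>x\<in>V. \<forall>y\<in>V. (x, y) \<in> (induced_edges E V)\<^sup>*)"

definition component_of :: "'a set \<Rightarrow> ('a \<times> 'a) set \<Rightarrow> 'a \<Rightarrow> 'a set" where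
  "component_of V E x = {y \<in> V. (x, y) \<in> (induced_edges E V)\<^sup>*}"

definition is_cutset :: "'a set \<Rightarrow> ('a \<times> 'a) set \<Rightarrow> 'a set \<Rightarrow> bool" where
  "is_cutset V E S \<longleftrightarrow> S \<subseteq> V \<and>
     (\<exists>x\<in>V - S. \<exists>y\<in>V - S. (x, y) \<notin> (induced_edges E (V - S))\<^sup>*)"

definition is_Rg_cutset :: "nat \<Rightarrow> 'a set \<Rightarrow> ('a \<times> 'a) set \<Rightarrow> 'a set \<Rightarrow> bool" where
  "is_Rg_cutset g V E S \<longleftrightarrow> is_cutset V E S \<and>
     (\<forall>x\<in>V - S. card (component_of (V - S) E x) \<ge> g + 1)"

definition has_Rg_cutset :: "nat \<Rightarrow> 'a set \<Rightarrow> ('a \<times> 'a) set \<Rightarrow> bool" where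
  "has_Rg_cutset g V E \<longleftrightarrow> (\<exists>S. is_Rg_cutset g V E S)"

text \<open>g-extra connectivity: minimum cardinality of an R_g-cutset (meaningful when
  one exists).\<close>
definition kappa_g :: "nat \<Rightarrow> 'a set \<Rightarrow> ('a \<times> 'a) set \<Rightarrow> nat" where
  "kappa_g g V E = (LEAST k. \<exists>S. is_Rg_cutset g V E S \<and> card S = k)"

definition spanning_subgraph :: "'a set \<Rightarrow> ('a \<times> 'a) set \<Rightarrow> ('a \<times> 'a) set \<Rightarrow> bool" where
  "spanning_subgraph V F E \<longleftrightarrow> simple_graph V F \<and> F \<subseteq> E"

definition clique_edges :: "'a set \<Rightarrow> ('a \<times> 'a) set" where
  "clique_edges A = {(a, b). a \<in> A \<and> b \<in> A \<and> a \<noteq> b}"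

definition join_edges :: "'a set \<Rightarrow> 'a set \<Rightarrow> ('a \<times> 'a) set" where
  "join_edges A B = A \<times> B \<union> B \<times> A"

end

theory Submission
  imports Defs
begin

text \<open>In G the vertex u is adjacent to every other vertex, so G is connected and
  every R_g-cutset is nonempty; deleting u leaves the components X1, X2 and
  Y1 \<union> Y2 \<union> {v, w}, each with at least g + 1 vertices. In H, the vertex u keeps its
  edges to X1, X2 and Y2 only. Deleting a single vertex other than u leaves everything
  attached to u (Y1 is reached through Y2 and v or w), while deleting u isolates the
  vertices of X1, so no cutset of size at most one is an R_g-cutset. On the other hand
  {v, w} separates the clique Y1 from the rest of H, which is held together by u and
  contains the clique Y2.\<close>

lemma sym_induced_edges: "sym E \<Longrightarrow> sym (induced_edges E W)"
  unfolding induced_edges_def sym_def by auto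

lemma induced_edges_rtranclI:
  "(a, b) \<in> E \<Longrightarrow> a \<in> W \<Longrightarrow> b \<in> W \<Longrightarrow> (a, b) \<in> (induced_edges E W)\<^sup>*"
  unfolding induced_edges_def by auto

lemma rtrancl_closed_set:
  assumes "(x, y) \<in> R\<^sup>*" "x \<in> C" "R `` C \<subseteq> C"
  shows "y \<in> C"
  using Image_closed_trancl[OF assms(3)] assms(1,2) by blast

lemma rtrancl_through_hub:
  "sym R \<Longrightarrow> (r, x) \<in> R\<^sup>* \<Longrightarrow> (r, y) \<in> R\<^sup>* \<Longrightarrow> (x, y) \<in> R\<^sup>*"
  by (meson rtrancl_trans sym_rtrancl symD)

lemma clique_rtrancl:
  assumes "\<And>a b. a \<in> A \<Longrightarrow> b \<in> A \<Longrightarrow> a \<noteq> b \<Longrightarrow> (a, b) \<in> E" "A \<subseteq> W" "a \<in> A" "b \<in> A"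
  shows "(a, b) \<in> (induced_edges E W)\<^sup>*"
  using assms by (cases "a = b") (auto intro: induced_edges_rtranclI)

lemma connected_graphI_hub:
  assumes "sym E" "r \<in> V" "\<And>x. x \<in> V \<Longrightarrow> (r, x) \<in> (induced_edges E V)\<^sup>*"
  shows "connected_graph V E"
  using assms rtrancl_through_hub[OF sym_induced_edges[OF assms(1)]]
  unfolding connected_graph_def by blast

lemma not_cutset_hub:
  assumes "sym E" "r \<in> V - S" "\<And>x. x \<in> V - S \<Longrightarrow> (r, x) \<in> (induced_edges E (V - S))\<^sup>*"
  shows "\<not> is_cutset V E S"
  using assms rtrancl_through_hub[OF sym_induced_edges[OF assms(1)]]
  unfolding is_cutset_def by blast

lemma is_cutsetI_closed:
  assumes "S \<subseteq> V" "x \<in> C" "y \<in> V - S" "y \<notin> C" "C \<subseteq> V - S"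
    "induced_edges E (V - S) `` C \<subseteq> C"
  shows "is_cutset V E S"
  using assms rtrancl_closed_set[of x y _ C] unfolding is_cutset_def by blast

lemma card_component_of_ge:
  assumes "finite W" "A \<subseteq> W" "\<And>a. a \<in> A \<Longrightarrow> (x, a) \<in> (induced_edges E W)\<^sup>*"
  shows "card A \<le> card (component_of W E x)"
  by (rule card_mono) (use assms in \<open>auto simp: component_of_def\<close>)

lemma component_of_isolated:
  assumes "x \<in> W" "\<And>b. (x, b) \<in> E \<Longrightarrow> b \<notin> W"
  shows "component_of W E x = {x}"
proof -
  have "y = x" if "(x, y) \<in> (induced_edges E W)\<^sup>*" for y
    using that assms(2) by (cases rule: converse_rtranclE) (auto simp: induced_edges_def)
  then show ?thesis using assms(1) by (auto simp: component_of_def)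
qed

lemma connected_Rg_cutset_nonempty:
  "connected_graph V E \<Longrightarrow> is_Rg_cutset g V E S \<Longrightarrow> S \<noteq> {}"
  unfolding connected_graph_def is_Rg_cutset_def is_cutset_def by auto

lemma clique_edges_iff: "(a, b) \<in> clique_edges A \<longleftrightarrow> a \<in> A \<and> b \<in> A \<and> a \<noteq> b"
  unfolding clique_edges_def by simp

lemma join_edges_iff: "(a, b) \<in> join_edges A B \<longleftrightarrow> a \<in> A \<and> b \<in> B \<or> a \<in> B \<and> b \<in> A"
  unfolding join_edges_def by blast

lemma sym_clique_edges: "sym (clique_edges A)"
  unfolding clique_edges_def sym_def by blast

lemma sym_join_edges: "sym (join_edges A B)"
  unfolding join_edges_def sym_def by blast

lemma sym_Diff: "sym A \<Longrightarrow> sym B \<Longrightarrow> sym (A - B)"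
  unfolding sym_def by blast

lemma kappa_g_eqI:
  assumes "is_Rg_cutset g V E S" "card S = k" "\<And>T. is_Rg_cutset g V E T \<Longrightarrow> k \<le> card T"
  shows "kappa_g g V E = k"
  unfolding kappa_g_def by (rule Least_equality) (use assms in auto)

locale kappa_gap_graphs =
  fixes g :: nat and X1 X2 Y1 Y2 :: "'a set" and u v w :: 'a
    and V :: "'a set" and EG EH :: "('a \<times> 'a) set"
  assumes g_pos: "g \<ge> 1"
    and card_X1: "card X1 \<ge> g + 1" and card_X2: "card X2 \<ge> g + 1"
    and card_Y1: "card Y1 \<ge> g + 1" and card_Y2: "card Y2 \<ge> g + 1"
    and disjoint: "X1 \<inter> X2 = {}" "X1 \<inter> Y1 = {}" "X1 \<inter> Y2 = {}"
      "X2 \<inter> Y1 = {}" "X2 \<inter> Y2 = {}" "Y1 \<inter> Y2 = {}"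
    and distinct: "u \<noteq> v" "u \<noteq> w" "v \<noteq> w"
    and hubs_disjoint: "{u, v, w} \<inter> (X1 \<union> X2 \<union> Y1 \<union> Y2) = {}"
    and V_eq: "V = X1 \<union> X2 \<union> Y1 \<union> Y2 \<union> {u, v, w}"
    and EG_eq: "EG = clique_edges X1 \<union> clique_edges X2 \<union> clique_edges Y1 \<union> clique_edges Y2
            \<union> join_edges {u} (X1 \<union> X2 \<union> Y1 \<union> Y2)
            \<union> join_edges {v} (Y1 \<union> Y2) \<union> join_edges {w} (Y1 \<union> Y2)
            \<union> join_edges {u} {v, w}"
    and EH_eq: "EH = EG - (clique_edges X1 \<union> clique_edges X2 \<union> join_edges {u} Y1
                  \<union> join_edges {u} {v, w})"
begin

lemma finite_V: "finite V"
  using card_X1 card_X2 card_Y1 card_Y2 card.infinite unfolding V_eq by fastforce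

lemma sym_EG: "sym EG"
  unfolding EG_eq by (intro sym_Un sym_clique_edges sym_join_edges)

lemma sym_EH: "sym EH"
  unfolding EH_eq by (intro sym_Diff sym_EG sym_Un sym_clique_edges sym_join_edges)

lemma EG_subset: "EG \<subseteq> V \<times> V"
  unfolding V_eq EG_eq clique_edges_def join_edges_def by blast

lemma EG_irrefl: "(x, x) \<notin> EG"
  using hubs_disjoint distinct unfolding EG_eq clique_edges_def join_edges_def by blast

lemma simple_graph_EG: "simple_graph V EG"
  using finite_V sym_EG EG_subset EG_irrefl unfolding simple_graph_def by blast

lemma spanning_subgraph_EH: "spanning_subgraph V EH EG"
  using finite_V sym_EH EG_subset EG_irrefl unfolding spanning_subgraph_def simple_graph_def EH_eq
  by blast

lemma EG_iff: "(a, b) \<in> EG \<longleftrightarrow>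
    (a \<in> X1 \<and> b \<in> X1 \<and> a \<noteq> b) \<or> (a \<in> X2 \<and> b \<in> X2 \<and> a \<noteq> b) \<or>
    (a \<in> Y1 \<and> b \<in> Y1 \<and> a \<noteq> b) \<or> (a \<in> Y2 \<and> b \<in> Y2 \<and> a \<noteq> b) \<or>
    (a = u \<and> b \<in> X1 \<union> X2 \<union> Y1 \<union> Y2) \<or> (a \<in> X1 \<union> X2 \<union> Y1 \<union> Y2 \<and> b = u) \<or>
    (a = v \<and> b \<in> Y1 \<union> Y2) \<or> (a \<in> Y1 \<union> Y2 \<and> b = v) \<or>
    (a = w \<and> b \<in> Y1 \<union> Y2) \<or> (a \<in> Y1 \<union> Y2 \<and> b = w) \<or>
    (a = u \<and> b \<in> {v, w}) \<or> (a \<in> {v, w} \<and> b = u)"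
  unfolding EG_eq Un_iff clique_edges_iff join_edges_iff singleton_iff by (simp only: disj_assoc)

lemma EH_iff: "(a, b) \<in> EH \<longleftrightarrow> (a, b) \<in> EG \<and>
    \<not> ((a \<in> X1 \<and> b \<in> X1 \<and> a \<noteq> b) \<or> (a \<in> X2 \<and> b \<in> X2 \<and> a \<noteq> b) \<or>
       (a = u \<and> b \<in> Y1) \<or> (a \<in> Y1 \<and> b = u) \<or> (a = u \<and> b \<in> {v, w}) \<or> (a \<in> {v, w} \<and> b = u))"
  unfolding EH_eq Diff_iff Un_iff clique_edges_iff join_edges_iff singleton_iff by (simp only: disj_assoc)

lemma EG_u: "x \<in> V \<Longrightarrow> x \<noteq> u \<Longrightarrow> (u, x) \<in> EG"
  unfolding V_eq EG_iff by blast

lemma EG_clique_X1: "a \<in> X1 \<Longrightarrow> b \<in> X1 \<Longrightarrow> a \<noteq> b \<Longrightarrow> (a, b) \<in> EG"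
  unfolding EG_iff by blast

lemma EG_clique_X2: "a \<in> X2 \<Longrightarrow> b \<in> X2 \<Longrightarrow> a \<noteq> b \<Longrightarrow> (a, b) \<in> EG"
  unfolding EG_iff by blast

lemma EG_vw_Y: "z \<in> {v, w} \<Longrightarrow> y \<in> Y1 \<union> Y2 \<Longrightarrow> (z, y) \<in> EG \<and> (y, z) \<in> EG"
  unfolding EG_iff by blast

lemma EG_neighbour_X1:
  assumes "x \<in> X1" "(x, b) \<in> EG"
  shows "b \<in> X1 \<union> {u}"
proof -
  have "x \<notin> X2" "x \<notin> Y1" "x \<notin> Y2" "x \<noteq> u" "x \<noteq> v" "x \<noteq> w"
    using assms(1) disjoint hubs_disjoint by blast+
  then show ?thesis using assms unfolding EG_iff by auto
qed

lemma EH_u: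
  assumes "x \<in> X1 \<union> X2 \<union> Y2"
  shows "(u, x) \<in> EH \<and> (x, u) \<in> EH"
proof -
  have "x \<notin> Y1" "x \<noteq> u" "x \<noteq> v" "x \<noteq> w" "u \<notin> X1" "u \<notin> X2"
    using assms disjoint hubs_disjoint by blast+
  then show ?thesis using assms unfolding EH_iff EG_iff by auto
qed

lemma EH_vw_Y: "z \<in> {v, w} \<Longrightarrow> y \<in> Y1 \<union> Y2 \<Longrightarrow> (z, y) \<in> EH \<and> (y, z) \<in> EH"
  using disjoint hubs_disjoint distinct unfolding EH_iff EG_iff by blast

lemma EH_clique_Y1: "a \<in> Y1 \<Longrightarrow> b \<in> Y1 \<Longrightarrow> a \<noteq> b \<Longrightarrow> (a, b) \<in> EH"
  using disjoint hubs_disjoint unfolding EH_iff EG_iff by blast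

lemma EH_neighbour_X:
  assumes "x \<in> X1 \<union> X2" "(x, b) \<in> EH"
  shows "b = u"
proof -
  have "x \<notin> Y1" "x \<notin> Y2" "x \<noteq> u" "x \<noteq> v" "x \<noteq> w"
    using assms(1) disjoint hubs_disjoint by blast+
  then show ?thesis using assms unfolding EH_iff EG_iff by auto
qed

lemma EH_neighbour_Y1:
  assumes "y \<in> Y1" "(y, b) \<in> EH"
  shows "b \<in> Y1 \<union> {v, w}"
proof -
  have "y \<notin> X1" "y \<notin> X2" "y \<notin> Y2" "y \<noteq> u" "y \<noteq> v" "y \<noteq> w"
    using assms(1) disjoint hubs_disjoint by blast+
  then show ?thesis using assms unfolding EH_iff EG_iff by auto
qed

lemma connected_graph_EG: "connected_graph V EG"
proof (rule connected_graphI_hub[OF sym_EG])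
  show "u \<in> V" unfolding V_eq by blast
  show "(u, x) \<in> (induced_edges EG V)\<^sup>*" if "x \<in> V" for x
    using that \<open>u \<in> V\<close> by (cases "x = u") (auto intro: induced_edges_rtranclI EG_u)
qed

lemma EH_reachable_from_u:
  assumes "s \<noteq> u" "S \<subseteq> {s}" "x \<in> V - S"
  shows "(u, x) \<in> (induced_edges EH (V - S))\<^sup>*"
proof -
  let ?R = "(induced_edges EH (V - S))\<^sup>*"
  have u: "u \<in> V - S" using assms(1,2) unfolding V_eq by blast
  have "card Y2 \<ge> 2" using card_Y2 g_pos by linarith
  then obtain y where y: "y \<in> Y2" "y \<notin> S"
    using assms(2) card_mono[of "{s}" Y2] by force
  have y_V: "y \<in> V - S" using y unfolding V_eq by blast
  have u_vw: "(u, z) \<in> ?R" if "z \<in> {v, w} - S" for z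
  proof -
    have "z \<in> V - S" using that unfolding V_eq by blast
    then have "(u, y) \<in> ?R" "(y, z) \<in> ?R"
      using EH_u[of y] EH_vw_Y[of z y] y y_V u that by (auto intro: induced_edges_rtranclI)
    then show ?thesis by (rule rtrancl_trans)
  qed
  consider "x = u" | "x \<in> X1 \<union> X2 \<union> Y2" | "x \<in> {v, w} - S" | "x \<in> Y1"
    using assms(3) unfolding V_eq by blast
  then show ?thesis
  proof cases
    case 2
    then show ?thesis using EH_u u assms(3) by (blast intro: induced_edges_rtranclI)
  next
    case 4
    obtain z where z: "z \<in> {v, w} - S" using assms(2) distinct(3) by blast
    then have "(z, x) \<in> ?R"
      using EH_vw_Y[of z x] 4 assms(3) unfolding V_eq by (auto intro: induced_edges_rtranclI)
    with u_vw[OF z] show ?thesis by (rule rtrancl_trans)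
  qed (use u_vw in auto)
qed

lemma connected_graph_EH: "connected_graph V EH"
proof (rule connected_graphI_hub[OF sym_EH])
  show "u \<in> V" unfolding V_eq by blast
  show "(u, x) \<in> (induced_edges EH V)\<^sup>*" if "x \<in> V" for x
    using EH_reachable_from_u[of v "{}" x] that distinct by simp
qed

lemma Rg_cutset_EG: "is_Rg_cutset g V EG {u}"
proof -
  let ?W = "V - {u}"
  let ?R = "(induced_edges EG ?W)\<^sup>*"
  have sets: "X1 \<subseteq> ?W" "X2 \<subseteq> ?W" "Y1 \<subseteq> ?W" "v \<in> ?W" "w \<in> ?W"
    using hubs_disjoint distinct unfolding V_eq by auto
  obtain x y where "x \<in> X1" "y \<in> Y1"
    using card_X1 card_Y1 by fastforce
  moreover have "induced_edges EG ?W `` X1 \<subseteq> X1"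
    using EG_neighbour_X1 unfolding induced_edges_def by blast
  ultimately have "is_cutset V EG {u}"
    using sets disjoint(2) unfolding V_eq by (intro is_cutsetI_closed[where C = X1]) auto
  moreover have "card (component_of ?W EG z) \<ge> g + 1" if z: "z \<in> ?W" for z
  proof -
    have "finite ?W" using finite_V by blast
    consider "z \<in> X1" | "z \<in> X2" | "z \<in> Y1 \<union> Y2 \<union> {v, w}"
      using z unfolding V_eq by blast
    then show ?thesis
    proof cases
      case 1
      then have "card X1 \<le> card (component_of ?W EG z)"
        using \<open>finite ?W\<close> sets EG_clique_X1
        by (intro card_component_of_ge clique_rtrancl) auto
      then show ?thesis using card_X1 by linarith
    next
      case 2
      then have "card X2 \<le> card (component_of ?W EG z)"
        using \<open>finite ?W\<close> sets EG_clique_X2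
        by (intro card_component_of_ge clique_rtrancl) auto
      then show ?thesis using card_X2 by linarith
    next
      case 3
      have "(z, a) \<in> ?R" if a: "a \<in> Y1" for a
      proof (cases "z \<in> {v, w}")
        case True
        then show ?thesis using EG_vw_Y a z sets by (blast intro: induced_edges_rtranclI)
      next
        case False
        then have "(z, v) \<in> ?R" "(v, a) \<in> ?R"
          using EG_vw_Y[of v] 3 a z sets by (auto intro: induced_edges_rtranclI)
        then show ?thesis by (rule rtrancl_trans)
      qed
      then have "card Y1 \<le> card (component_of ?W EG z)"
        using \<open>finite ?W\<close> sets by (intro card_component_of_ge) auto
      then show ?thesis using card_Y1 by linarith
    qed
  qed
  ultimately show ?thesis unfolding is_Rg_cutset_def by blast
qed

lemma Rg_cutset_EH: "is_Rg_cutset g V EH {v, w}"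
proof -
  let ?W = "V - {v, w}"
  let ?R = "(induced_edges EH ?W)\<^sup>*"
  have sets: "Y1 \<subseteq> ?W" "Y2 \<subseteq> ?W" "u \<in> ?W"
    using hubs_disjoint distinct unfolding V_eq by auto
  obtain y where "y \<in> Y1"
    using card_Y1 by fastforce
  moreover have "induced_edges EH ?W `` Y1 \<subseteq> Y1"
    using EH_neighbour_Y1 unfolding induced_edges_def by blast
  ultimately have "is_cutset V EH {v, w}"
    using sets hubs_disjoint by (intro is_cutsetI_closed[of "{v, w}" V y Y1 u]) (auto simp: V_eq)
  moreover have "card (component_of ?W EH z) \<ge> g + 1" if z: "z \<in> ?W" for z
  proof -
    have "finite ?W" using finite_V by blast
    consider "z \<in> Y1" | "z \<in> X1 \<union> X2 \<union> Y2 \<union> {u}"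
      using z unfolding V_eq by blast
    then show ?thesis
    proof cases
      case 1
      then have "card Y1 \<le> card (component_of ?W EH z)"
        using \<open>finite ?W\<close> sets EH_clique_Y1
        by (intro card_component_of_ge clique_rtrancl) auto
      then show ?thesis using card_Y1 by linarith
    next
      case 2
      have "(z, u) \<in> ?R"
        using 2 EH_u[of z] z sets by (cases "z = u") (auto intro: induced_edges_rtranclI)
      moreover have "(u, a) \<in> ?R" if "a \<in> Y2" for a
        using that EH_u[of a] sets by (blast intro: induced_edges_rtranclI)
      ultimately have "card Y2 \<le> card (component_of ?W EH z)"
        using \<open>finite ?W\<close> sets by (intro card_component_of_ge) (auto intro: rtrancl_trans)
      then show ?thesis using card_Y2 by linarith
    qed
  qed
  ultimately show ?thesis unfolding is_Rg_cutset_def by blast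
qed

lemma kappa_g_EG: "kappa_g g V EG = 1"
proof (rule kappa_g_eqI[OF Rg_cutset_EG])
  fix T assume T: "is_Rg_cutset g V EG T"
  then have "finite T" "T \<noteq> {}"
    using finite_V connected_Rg_cutset_nonempty[OF connected_graph_EG]
    unfolding is_Rg_cutset_def is_cutset_def by (auto intro: finite_subset)
  then show "1 \<le> card T" by (simp add: Suc_leI card_gt_0_iff)
qed simp

lemma kappa_g_EH: "kappa_g g V EH = 2"
proof (rule kappa_g_eqI[OF Rg_cutset_EH])
  show "card {v, w} = 2" using distinct by simp
  fix T assume T: "is_Rg_cutset g V EH T"
  show "2 \<le> card T"
  proof (rule ccontr)
    assume "\<not> 2 \<le> card T"
    moreover have "finite T"
      using T finite_V unfolding is_Rg_cutset_def is_cutset_def by (auto intro: finite_subset)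
    ultimately obtain s where s: "T \<subseteq> {s}"
      by (metis card_1_singleton_iff card_0_eq empty_subsetI less_2_cases not_le subset_refl)
    show False
    proof (cases "s = u")
      case False
      have "\<not> is_cutset V EH T"
        using EH_reachable_from_u[OF False s] False s
        by (intro not_cutset_hub[OF sym_EH, of u]) (auto simp: V_eq)
      then show False using T unfolding is_Rg_cutset_def by blast
    next
      case True
      then have T_u: "T = {u}" using s T connected_Rg_cutset_nonempty[OF connected_graph_EH] by blast
      obtain x where x: "x \<in> X1" using card_X1 by fastforce
      then have "x \<in> V - T" using T_u hubs_disjoint unfolding V_eq by blast
      moreover have "component_of (V - T) EH x = {x}"
        using \<open>x \<in> V - T\<close> EH_neighbour_X[of x] x T_u by (intro component_of_isolated) auto
      ultimately have "g + 1 \<le> card {x}" using T unfolding is_Rg_cutset_def by metis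
      then show False using g_pos by simp
    qed
  qed
qed

lemma kappa_gap:
  "simple_graph V EG \<and> connected_graph V EG \<and>
   spanning_subgraph V EH EG \<and> connected_graph V EH \<and>
   has_Rg_cutset g V EG \<and> has_Rg_cutset g V EH \<and>
   kappa_g g V EG = 1 \<and> kappa_g g V EH = 2"
  using simple_graph_EG connected_graph_EG spanning_subgraph_EH connected_graph_EH
    Rg_cutset_EG Rg_cutset_EH kappa_g_EG kappa_g_EH
  unfolding has_Rg_cutset_def by blast

end

lemma ex_kappa_gap_graphs_nat:
  assumes "g \<ge> 1"
  shows "\<exists>(X1 :: nat set) X2 Y1 Y2 u v w V EG EH. kappa_gap_graphs g X1 X2 Y1 Y2 u v w V EG EH"
proof -
  define n where "n = g + 1"
  show ?thesis
    unfolding kappa_gap_graphs_def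
    by (rule exI[of _ "{0..<n}"], rule exI[of _ "{n..<2*n}"], rule exI[of _ "{2*n..<3*n}"],
        rule exI[of _ "{3*n..<4*n}"], rule exI[of _ "4*n"], rule exI[of _ "4*n+1"],
        rule exI[of _ "4*n+2"], intro exI conjI refl)
       (use assms in \<open>auto simp: n_def\<close>)
qed

theorem mainTheorem2:
  fixes g :: nat
  assumes "g \<ge> 1"
  shows
   "(\<exists>(V :: nat set) EG EH.
       simple_graph V EG \<and> connected_graph V EG \<and>
       spanning_subgraph V EH EG \<and> connected_graph V EH \<and>
       has_Rg_cutset g V EG \<and> has_Rg_cutset g V EH \<and>
       kappa_g g V EG = 1 \<and> kappa_g g V EH = 2 \<and> kappa_g g V EH > kappa_g g V EG)
    \<and>
    (\<forall>(X1 :: 'a set) X2 Y1 Y2 u v w V EG EH.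
       card X1 \<ge> g + 1 \<and> card X2 \<ge> g + 1 \<and> card Y1 \<ge> g + 1 \<and> card Y2 \<ge> g + 1 \<and>
       X1 \<inter> X2 = {} \<and> X1 \<inter> Y1 = {} \<and> X1 \<inter> Y2 = {} \<and>
       X2 \<inter> Y1 = {} \<and> X2 \<inter> Y2 = {} \<and> Y1 \<inter> Y2 = {} \<and>
       u \<noteq> v \<and> u \<noteq> w \<and> v \<noteq> w \<and>
       {u, v, w} \<inter> (X1 \<union> X2 \<union> Y1 \<union> Y2) = {} \<and>
       V = X1 \<union> X2 \<union> Y1 \<union> Y2 \<union> {u, v, w} \<and>
       EG = clique_edges X1 \<union> clique_edges X2 \<union> clique_edges Y1 \<union> clique_edges Y2
            \<union> join_edges {u} (X1 \<union> X2 \<union> Y1 \<union> Y2)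
            \<union> join_edges {v} (Y1 \<union> Y2) \<union> join_edges {w} (Y1 \<union> Y2)
            \<union> join_edges {u} {v, w} \<and>
       EH = EG - (clique_edges X1 \<union> clique_edges X2 \<union> join_edges {u} Y1
                  \<union> join_edges {u} {v, w})
     \<longrightarrow>
       simple_graph V EG \<and> connected_graph V EG \<and>
       spanning_subgraph V EH EG \<and> connected_graph V EH \<and>
       has_Rg_cutset g V EG \<and> has_Rg_cutset g V EH \<and>
       kappa_g g V EG = 1 \<and> kappa_g g V EH = 2)"
proof (rule conjI, goal_cases)
  case 1
  obtain X1 X2 Y1 Y2 u v w and V :: "nat set" and EG EH
    where "kappa_gap_graphs g X1 X2 Y1 Y2 u v w V EG EH"
    using ex_kappa_gap_graphs_nat[OF assms] by blast
  from kappa_gap_graphs.kappa_gap[OF this] show ?case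
    by (intro exI[of _ V] exI[of _ EG] exI[of _ EH]) simp
next
  case 2
  show ?case
  proof (intro allI impI, goal_cases)
    case (1 X1 X2 Y1 Y2 u v w V EG EH)
    with assms have "kappa_gap_graphs g X1 X2 Y1 Y2 u v w V EG EH"
      unfolding kappa_gap_graphs_def by (elim conjE) (intro conjI; assumption)
    then show ?case by (rule kappa_gap_graphs.kappa_gap)
  qed
qed

end
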